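(* Let $A\in\mathbb{R}^{d\times d}$, $B\in\mathbb{R}^{d\times d_u}$, and suppose the controllability matrix $\mathcal{G}=[B\ AB\ \cdots\ A^dB]$ has rank $s_c<d$. Let $T$ be an invertible matrix such that $$TAT^{-1}=\begin{bmatrix}A_1&X_{12}\\0&X_2\end{bmatrix},\qquad TB=\begin{bmatrix}B_1\\0\end{bmatrix},$$ with $A_1\in\mathbb{R}^{s_c\times s_c}$, $X_{12}\in\mathbb{R}^{s_c\times(d-s_c)}$, $X_2\in\mathbb{R}^{(d-s_c)\times(d-s_c)}$, and define the relevant disturbances matrix $\mathcal{RD}=[X_{12}^\top\ \ X_2^\top X_{12}^\top\ \cdots\ (X_2^\top)^{d-s_c}X_{12}^\top]$. If $\mathrm{rank}(\mathcal{RD})=s_e$, then $L=(A,B,I_d)$ is equivalent to a PC-LQ: there is an invertible matrix $S$ such that $$SAS^{-1}=\begin{bmatrix}A_1&A_{12}&0\\0&A_2&0\\0&A_{32}&A_3\end{bmatrix},\qquad SB=\begin{bmatrix}B_1\\0\\0\end{bmatrix},$$ with $A_1\in\mathbb{R}^{s_c\times s_c}$ and $A_2\in\mathbb{R}^{s_e\times s_e}$.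
   Context: Such a transformation $T$ always exists when $\mathrm{rank}(\mathcal G)=s_c$. The paper phrases the conclusion as "$L$ is rotationally equivalent to" the three-block (PC-LQ) form; equivalence here means a change of state coordinates $x\mapsto Sx$. *)

theory Defs
  imports "Jordan_Normal_Form.DL_Rank"
begin

definition mat_rank :: "real mat \<Rightarrow> nat" where
  "mat_rank M = vec_space.rank (dim_row M) M"

text \<open>Block Krylov matrix [N, M N, M^2 N, ..., M^k N] (k+1 column blocks).\<close>
definition block_krylov :: "real mat \<Rightarrow> real mat \<Rightarrow> nat \<Rightarrow> real mat" where
  "block_krylov M N k =
     mat (dim_row N) (dim_col N * (k + 1))
       (\<lambda>(i, j). ((M ^\<^sub>m (j div dim_col N)) * N) $$ (i, j mod dim_col N))"

text \<open>3x3 block matrix; row sizes taken from the first block column,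
  column sizes from the first block row.\<close>
definition block3_mat ::
  "real mat \<Rightarrow> real mat \<Rightarrow> real mat \<Rightarrow> real mat \<Rightarrow> real mat \<Rightarrow> real mat \<Rightarrow>
   real mat \<Rightarrow> real mat \<Rightarrow> real mat \<Rightarrow> real mat" where
  "block3_mat M11 M12 M13 M21 M22 M23 M31 M32 M33 =
     (let r1 = dim_row M11; r2 = dim_row M21; r3 = dim_row M31;
          c1 = dim_col M11; c2 = dim_col M12; c3 = dim_col M13
      in mat (r1 + r2 + r3) (c1 + c2 + c3) (\<lambda>(i, j).
        if i < r1 then
          (if j < c1 then M11 $$ (i, j) else if j < c1 + c2 then M12 $$ (i, j - c1)
           else M13 $$ (i, j - c1 - c2))
        else if i < r1 + r2 then
          (if j < c1 then M21 $$ (i - r1, j) else if j < c1 + c2 then M22 $$ (i - r1, j - c1)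
           else M23 $$ (i - r1, j - c1 - c2))
        else
          (if j < c1 then M31 $$ (i - r1 - r2, j) else if j < c1 + c2 then M32 $$ (i - r1 - r2, j - c1)
           else M33 $$ (i - r1 - r2, j - c1 - c2))))"

end

theory Submission
  imports Defs
begin

(* Since any
   d - sc + 1 vectors of the form (X2^T)^i c are linearly dependent, later Krylov vectors add
   nothing, so the column space W of RD is X2^T-invariant; it also contains the columns of X12^T.
   Take an invertible R whose first se = dim W columns form a basis of W. Then R^-1 X2^T R is block
   lower triangular and R^-1 X12^T vanishes below row se. Transposing, P = R^T gives
   P X2 P^-1 = [A2 0; A32 A3] and X12 P^-1 = [A12 0], and S = diag(I, P) T is the required change
   of coordinates. *)

lemma pow_mat_Suc_left:
  assumes "M \<in> carrier_mat n n"
  shows "M ^\<^sub>m Suc k = M * M ^\<^sub>m k"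
proof (induction k)
  case (Suc k)
  have "M ^\<^sub>m Suc (Suc k) = (M * M ^\<^sub>m k) * M" using Suc by simp
  also have "\<dots> = M * (M ^\<^sub>m k * M)" using assms by (simp add: assoc_mult_mat[of _ n n _ n _ n])
  finally show ?case by simp
qed (use assms in simp)

lemma pow_mat_Suc_mult_vec:
  assumes "M \<in> carrier_mat n n" and "c \<in> carrier_vec n"
  shows "(M ^\<^sub>m Suc k) *\<^sub>v c = M *\<^sub>v ((M ^\<^sub>m k) *\<^sub>v c)"
  unfolding pow_mat_Suc_left[OF assms(1)] using assms by (intro assoc_mult_mat_vec) auto

context vec_space
begin

lemma mult_mat_vec_in_span:
  assumes M: "M \<in> carrier_mat n n" and S: "S \<subseteq> carrier_vec n" and T: "T \<subseteq> carrier_vec n"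
    and maps_to: "\<And>s. s \<in> S \<Longrightarrow> M *\<^sub>v s \<in> span T" and x: "x \<in> span S"
  shows "M *\<^sub>v x \<in> span T"
proof -
  obtain a A where x_eq: "x = lincomb a A" and "finite A" and "A \<subseteq> S"
    using in_spanE[OF x] by blast
  have "M *\<^sub>v lincomb a A \<in> span T" using \<open>finite A\<close> \<open>A \<subseteq> S\<close>
  proof (induction A rule: finite_induct)
    case empty
    have "M *\<^sub>v 0\<^sub>v n = 0\<^sub>v n" using M by (intro eq_vecI) auto
    then show ?case using vectorspace.span_zero[OF vectorspace_axioms] by simp
  next
    case (insert v F)
    have v: "v \<in> carrier_vec n" and F: "F \<subseteq> carrier_vec n" using insert S by auto
    have "M *\<^sub>v lincomb a (insert v F) = a v \<cdot>\<^sub>v (M *\<^sub>v v) + M *\<^sub>v lincomb a F"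
      using lincomb_insert2[OF insert(1) F _ insert(2) v] M v F
      by (simp add: mult_add_distrib_mat_vec mult_mat_vec)
    moreover have "a v \<cdot>\<^sub>v (M *\<^sub>v v) \<in> span T" using smult_in_span[OF T maps_to] insert by auto
    ultimately show ?case using span_add1[OF T] insert by simp
  qed
  then show ?thesis using x_eq by simp
qed

lemma obtain_in_span_of_predecessors:
  assumes f: "\<And>i. f i \<in> carrier_vec n"
  obtains k where "k \<le> n" and "f k \<in> span (f ` {..<k})"
proof (rule ccontr)
  assume "\<not> thesis"
  with that have new: "f k \<notin> span (f ` {..<k})" if "k \<le> n" for k
    using \<open>k \<le> n\<close> by auto
  have fS: "f ` A \<subseteq> carrier_vec n" for A using f by auto
  have "lin_indpt (f ` {..<k}) \<and> card (f ` {..<k}) = k" if "k \<le> Suc n" for k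
    using that
  proof (induction k)
    case 0 then show ?case by (simp add: lin_dep_def)
  next
    case (Suc k)
    then have IH: "lin_indpt (f ` {..<k})" "card (f ` {..<k}) = k"
      and new: "f k \<notin> span (f ` {..<k})" using new by auto
    have "f k \<notin> f ` {..<k}" using new in_own_span[OF fS] by blast
    moreover have "lin_indpt (f ` {..<k} \<union> {f k})"
      using lin_dep_iff_in_span[OF fS IH(1) f] new calculation by simp
    ultimately show ?case using IH(2) by (simp add: lessThan_Suc Un_commute)
  qed
  from this[of "Suc n"] li_le_dim(2)[OF fin_dim fS] dim_is_n show False by fastforce
qed

lemma krylov_sequence_in_span_of_prefix:
  assumes M: "M \<in> carrier_mat n n" and f: "\<And>i. f i \<in> carrier_vec n"
    and f_Suc: "\<And>i. f (Suc i) = M *\<^sub>v f i" and k: "f k \<in> span (f ` {..<k})"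
  shows "f j \<in> span (f ` {..<k})"
proof -
  have fS: "f ` {..<k} \<subseteq> carrier_vec n" using f by auto
  show ?thesis
  proof (induction j)
    case 0
    show ?case using k span_mem[OF fS] by (cases k) auto
  next
    case (Suc j)
    have "M *\<^sub>v f j \<in> span (f ` {..<k})"
    proof (rule mult_mat_vec_in_span[OF M fS fS _ Suc.IH])
      fix s assume "s \<in> f ` {..<k}"
      then obtain i where "i < k" and s: "s = f i" by auto
      then consider "Suc i = k" | "Suc i < k" by fastforce
      then have "f (Suc i) \<in> span (f ` {..<k})"
        using k span_mem[OF fS] by cases auto
      then show "M *\<^sub>v s \<in> span (f ` {..<k})" using s f_Suc by simp
    qed
    then show ?case using f_Suc by simp
  qed
qed

lemma pow_mult_vec_in_krylov_span:
  assumes M: "M \<in> carrier_mat n n" and c: "c \<in> carrier_vec n"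
  shows "(M ^\<^sub>m j) *\<^sub>v c \<in> span ((\<lambda>i. (M ^\<^sub>m i) *\<^sub>v c) ` {..n})"
proof -
  define f where "f i = (M ^\<^sub>m i) *\<^sub>v c" for i
  have f: "f i \<in> carrier_vec n" for i
    unfolding f_def using mult_mat_vec_carrier[OF pow_carrier_mat[OF M] c] .
  have f_Suc: "f (Suc i) = M *\<^sub>v f i" for i
    unfolding f_def using pow_mat_Suc_mult_vec[OF M c] .
  obtain k where "k \<le> n" and k: "f k \<in> span (f ` {..<k})"
    using obtain_in_span_of_predecessors[OF f] .
  have "f j \<in> span (f ` {..<k})" by (rule krylov_sequence_in_span_of_prefix[OF M f f_Suc k])
  also have "\<dots> \<subseteq> span (f ` {..n})" using \<open>k \<le> n\<close> by (intro span_is_monotone image_mono) auto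
  finally show ?thesis unfolding f_def by simp
qed

lemma maximal_lin_indpt_subset_spans:
  assumes C: "C \<subseteq> carrier_vec n" and max: "maximal S (\<lambda>T. T \<subseteq> C \<and> lin_indpt T)"
  shows "C \<subseteq> span S"
proof
  fix v assume v: "v \<in> C"
  have S: "S \<subseteq> C" "lin_indpt S" using max unfolding maximal_def by auto
  then have S_carrier: "S \<subseteq> carrier_vec n" using C by auto
  show "v \<in> span S"
  proof (rule ccontr)
    assume v_new: "v \<notin> span S"
    then have "v \<notin> S" using in_own_span[OF S_carrier] by blast
    moreover have "lin_indpt (S \<union> {v})"
      using lin_dep_iff_in_span[OF S_carrier S(2) _ calculation] v_new v C by auto
    then have "S \<union> {v} = S" using max S v unfolding maximal_def by blast
    ultimately show False by auto
  qed
qed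

lemma extend_lin_indpt_to_basis:
  assumes S: "S \<subseteq> carrier_vec n" "lin_indpt S"
  obtains B where "S \<subseteq> B" and "finite B" and "basis B"
proof -
  let ?P = "\<lambda>T. S \<subseteq> T \<and> T \<subseteq> carrier_vec n \<and> lin_indpt T"
  have "finite T \<and> card T \<le> n" if "?P T" for T
    using li_le_dim[OF fin_dim, of T] that dim_is_n by auto
  then obtain B where "finite B" and max: "maximal B ?P"
    using maximal_exists[of ?P n S] S by auto
  then have "S \<subseteq> B" unfolding maximal_def by auto
  with max have "maximal B (\<lambda>T. T \<subseteq> carrier_vec n \<and> lin_indpt T)"
    unfolding maximal_def by blast
  then have "basis B" using max_li_is_basis by simp
  with \<open>S \<subseteq> B\<close> \<open>finite B\<close> show thesis by (rule that)
qed

lemma obtain_basis_extending_column_space: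
  assumes K: "K \<in> carrier_mat n p"
  obtains us ws where "set (us @ ws) \<subseteq> carrier_vec n" and "length (us @ ws) = n"
    and "distinct (us @ ws)" and "lin_indpt (set (us @ ws))"
    and "length us = rank K" and "span (set us) = span (set (cols K))"
proof -
  let ?C = "set (cols K)"
  have C: "?C \<subseteq> carrier_vec n" using K cols_dim by blast
  obtain S where "finite S" and max: "maximal S (\<lambda>T. T \<subseteq> ?C \<and> lin_indpt T)"
    using maximal_exists_superset[of ?C "\<lambda>T. T \<subseteq> ?C \<and> lin_indpt T" "{}"]
    by (auto simp: lin_dep_def)
  then have S: "S \<subseteq> ?C" "lin_indpt S" and card_S: "card S = rank K"
    using rank_card_indpt[OF K max] unfolding maximal_def by auto
  have S_carrier: "S \<subseteq> carrier_vec n" using S C by auto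
  have span_S: "span S = span ?C"
  proof
    show "span S \<subseteq> span ?C" using S(1) by (rule span_is_monotone)
    show "span ?C \<subseteq> span S"
      using maximal_lin_indpt_subset_spans[OF C max] by (intro span_is_subset span_is_submodule S_carrier)
  qed
  obtain B where "S \<subseteq> B" and "finite B" and B: "basis B"
    using extend_lin_indpt_to_basis[OF S_carrier S(2)] .
  then have card_B: "card B = n" using dim_basis dim_is_n by simp
  obtain us where us: "set us = S" "distinct us" using finite_distinct_list[OF \<open>finite S\<close>] by blast
  obtain ws where ws: "set ws = B - S" "distinct ws"
    using finite_distinct_list[of "B - S"] \<open>finite B\<close> by blast
  have set_B: "set (us @ ws) = B" and distinct: "distinct (us @ ws)"
    using us ws \<open>S \<subseteq> B\<close> by auto
  show thesis
  proof (rule that)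
    show "set (us @ ws) \<subseteq> carrier_vec n" and "lin_indpt (set (us @ ws))"
      using B unfolding set_B basis_def by auto
    show "length (us @ ws) = n" using set_B distinct card_B distinct_card by metis
    show "length us = rank K" using us card_S distinct_card by metis
  qed (use distinct span_S us(1) in auto)
qed

lemma mat_of_cols_basis_invertible:
  assumes "set us \<subseteq> carrier_vec n" and "length us = n" and "distinct us" and "lin_indpt (set us)"
  obtains R' where "R' \<in> carrier_mat n n"
    and "mat_of_cols n us * R' = 1\<^sub>m n" and "R' * mat_of_cols n us = 1\<^sub>m n"
proof -
  let ?R = "mat_of_cols n us"
  have R: "?R \<in> carrier_mat n n" using assms(2) by auto
  have "rank ?R = n" using lin_indpt_full_rank[OF R] assms by simp
  then have "det ?R \<noteq> 0" using det_rank_iff[OF R] by simp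
  then show thesis using det_non_zero_imp_unit[OF R, of n] that
    unfolding Units_def by (auto simp: ring_mat_def)
qed

lemma left_inverse_mult_in_span_prefix:
  assumes us_ws: "set (us @ ws) \<subseteq> carrier_vec n" "length (us @ ws) = n"
    and R': "R' \<in> carrier_mat n n" "R' * mat_of_cols n (us @ ws) = 1\<^sub>m n"
    and w: "w \<in> span (set us)" and i: "length us \<le> i" "i < n"
  shows "(R' *\<^sub>v w) $ i = 0"
proof -
  let ?r = "length us" and ?R = "mat_of_cols n (us @ ws)"
  have "w \<in> span_list us" using w span_list_as_span[of us] us_ws(1) by simp
  then obtain a where w_a: "w = lincomb_list a us" by (metis in_span_listE)
  have w_eq: "w = mat_of_cols n us *\<^sub>v vec ?r a"
    unfolding w_a using us_ws(1) by (intro lincomb_list_as_mat_mult) auto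
  define y where "y = vec n (\<lambda>j. if j < ?r then a j else 0)"
  have "?R *\<^sub>v y = w"
  proof (rule eq_vecI)
    fix k assume "k < dim_vec w"
    then have k: "k < n" using w_eq by simp
    have "(?R *\<^sub>v y) $ k = (\<Sum>j = 0..<n. ?R $$ (k, j) * y $ j)"
      using k us_ws(2) unfolding y_def by (auto simp: scalar_prod_def intro!: sum.cong)
    also have "\<dots> = (\<Sum>j = 0..<?r. ?R $$ (k, j) * y $ j)"
      using us_ws(2) by (intro sum.mono_neutral_right) (auto simp: y_def)
    also have "\<dots> = (\<Sum>j = 0..<?r. us ! j $ k * a j)"
      using k us_ws(2) by (intro sum.cong) (auto simp: y_def mat_of_cols_index nth_append)
    also have "\<dots> = w $ k" using k by (simp add: w_eq scalar_prod_def mat_of_cols_index)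
    finally show "(?R *\<^sub>v y) $ k = w $ k" .
  qed (use w_eq in simp)
  have "?R \<in> carrier_mat n n" and "y \<in> carrier_vec n" using us_ws(2) by (auto simp: y_def)
  then have "R' *\<^sub>v w = (R' * ?R) *\<^sub>v y"
    using R'(1) \<open>?R *\<^sub>v y = w\<close> by (simp add: assoc_mult_mat_vec)
  also have "\<dots> = y" using R'(2) \<open>y \<in> carrier_vec n\<close> by simp
  finally show ?thesis using i by (simp add: y_def)
qed

lemma invariant_column_space_block_triangular:
  assumes M: "M \<in> carrier_mat n n" and K: "K \<in> carrier_mat n p"
    and invariant: "\<And>v. v \<in> set (cols K) \<Longrightarrow> M *\<^sub>v v \<in> span (set (cols K))"
  obtains R R' where "R \<in> carrier_mat n n" and "R' \<in> carrier_mat n n"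
    and "R * R' = 1\<^sub>m n" and "R' * R = 1\<^sub>m n" and "rank K \<le> n"
    and "\<And>i j. rank K \<le> i \<Longrightarrow> i < n \<Longrightarrow> j < rank K \<Longrightarrow> (R' * M * R) $$ (i, j) = 0"
    and "\<And>v i. v \<in> set (cols K) \<Longrightarrow> rank K \<le> i \<Longrightarrow> i < n \<Longrightarrow> (R' *\<^sub>v v) $ i = 0"
proof -
  let ?C = "set (cols K)"
  obtain us ws where us_ws: "set (us @ ws) \<subseteq> carrier_vec n" "length (us @ ws) = n"
    and basis: "distinct (us @ ws)" "lin_indpt (set (us @ ws))"
    and r: "length us = rank K" and span_us: "span (set us) = span ?C"
    using obtain_basis_extending_column_space[OF K] .
  define R where "R = mat_of_cols n (us @ ws)"
  have R: "R \<in> carrier_mat n n" unfolding R_def using us_ws(2) by auto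
  obtain R' where R': "R' \<in> carrier_mat n n" "R * R' = 1\<^sub>m n" "R' * R = 1\<^sub>m n"
    using mat_of_cols_basis_invertible[OF us_ws basis] unfolding R_def .
  have C: "?C \<subseteq> carrier_vec n" using K cols_dim by blast
  have tail_zero: "(R' *\<^sub>v w) $ i = 0" if "w \<in> span ?C" "rank K \<le> i" "i < n" for w i
    using left_inverse_mult_in_span_prefix[OF us_ws R'(1) R'(3)[unfolded R_def]] that r span_us by simp
  have block_zero: "(R' * M * R) $$ (i, j) = 0" if ij: "rank K \<le> i" "i < n" "j < rank K" for i j
  proof -
    have j: "j < length (us @ ws)" "(us @ ws) ! j = us ! j" using ij r by (auto simp: nth_append)
    then have "col R j = us ! j"
      unfolding R_def using col_mat_of_cols[OF j(1)] nth_mem[OF j(1)] us_ws(1) by auto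
    moreover have "us ! j \<in> span ?C"
      using nth_mem[of j us] ij r in_own_span[of "set us"] us_ws(1) span_us by auto
    ultimately have "M *\<^sub>v col R j \<in> span ?C"
      using mult_mat_vec_in_span[OF M C C invariant] by simp
    moreover have "(R' * M * R) $$ (i, j) = (R' *\<^sub>v (M *\<^sub>v col R j)) $ i"
      using ij R' M R r us_ws by (simp add: assoc_mult_mat[of _ n n _ n _ n] mult_mat_vec_def)
    ultimately show ?thesis using tail_zero ij by simp
  qed
  have "rank K \<le> n" using r us_ws(2) by simp
  from that[OF R R' this block_zero tail_zero[OF span_mem[OF C]]] show thesis .
qed

end

lemma block_krylov_carrier:
  assumes "N \<in> carrier_mat n m"
  shows "block_krylov M N k \<in> carrier_mat n (m * (k + 1))"
  using assms unfolding block_krylov_def by auto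

lemma col_block_krylov:
  assumes M: "M \<in> carrier_mat n n" and N: "N \<in> carrier_mat n m" and j: "j < m * (k + 1)"
  shows "col (block_krylov M N k) j = (M ^\<^sub>m (j div m)) *\<^sub>v col N (j mod m)"
proof -
  have "j mod m < m" using j by (cases m) auto
  then show ?thesis using M N j unfolding block_krylov_def by (intro eq_vecI) auto
qed

lemma pow_mult_col_in_cols_block_krylov:
  assumes M: "M \<in> carrier_mat n n" and N: "N \<in> carrier_mat n m" and "i \<le> k" and "r < m"
  shows "(M ^\<^sub>m i) *\<^sub>v col N r \<in> set (cols (block_krylov M N k))"
proof -
  have "i * m + r < (i + 1) * m" using \<open>r < m\<close> by simp
  also have "\<dots> \<le> (k + 1) * m" using \<open>i \<le> k\<close> by (intro mult_right_mono) auto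
  finally have j: "i * m + r < m * (k + 1)" by (simp add: mult.commute)
  have "col (block_krylov M N k) (i * m + r) = (M ^\<^sub>m i) *\<^sub>v col N r"
    using col_block_krylov[OF M N j] \<open>r < m\<close> by simp
  moreover have "col (block_krylov M N k) (i * m + r) \<in> set (cols (block_krylov M N k))"
    using j block_krylov_carrier[OF N, of M k] by (simp add: cols_def)
  ultimately show ?thesis by simp
qed

locale real_vec_space = vec_space "TYPE(real)" n for n

lemma (in real_vec_space) block_krylov_invariant:
  assumes M: "M \<in> carrier_mat n n" and N: "N \<in> carrier_mat n m"
    and v: "v \<in> set (cols (block_krylov M N n))"
  shows "M *\<^sub>v v \<in> span (set (cols (block_krylov M N n)))"
proof -
  have "dim_col (block_krylov M N n) = m * (n + 1)" using block_krylov_carrier[OF N] by blast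
  then obtain j where j: "j < m * (n + 1)" and "v = col (block_krylov M N n) j"
    using v by (auto simp: cols_def)
  then have "m > 0" and v_eq: "v = (M ^\<^sub>m (j div m)) *\<^sub>v col N (j mod m)"
    using col_block_krylov[OF M N j] by (auto intro: Nat.gr0I)
  then have r: "j mod m < m" by simp
  have c: "col N (j mod m) \<in> carrier_vec n" using col_dim[of N] N by simp
  let ?krylov = "(\<lambda>i. (M ^\<^sub>m i) *\<^sub>v col N (j mod m)) ` {..n}"
  have "M *\<^sub>v v = (M ^\<^sub>m Suc (j div m)) *\<^sub>v col N (j mod m)"
    unfolding v_eq pow_mat_Suc_mult_vec[OF M c] ..
  also have "\<dots> \<in> span ?krylov"
    by (rule pow_mult_vec_in_krylov_span[OF M c])
  finally have "M *\<^sub>v v \<in> span ?krylov" .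
  moreover have "?krylov \<subseteq> set (cols (block_krylov M N n))"
    using pow_mult_col_in_cols_block_krylov[OF M N _ r] by blast
  ultimately show ?thesis by (rule rev_subsetD[OF _ span_is_monotone])
qed

lemma krylov_adapted_change_of_basis:
  fixes X2 X12 :: "real mat"
  assumes X2: "X2 \<in> carrier_mat n n" and X12: "X12 \<in> carrier_mat m n"
    and rank: "mat_rank (block_krylov (transpose_mat X2) (transpose_mat X12) n) = r"
  obtains P P' where "P \<in> carrier_mat n n" and "P' \<in> carrier_mat n n"
    and "P * P' = 1\<^sub>m n" and "P' * P = 1\<^sub>m n" and "r \<le> n"
    and "\<And>i j. i < r \<Longrightarrow> r \<le> j \<Longrightarrow> j < n \<Longrightarrow> (P * X2 * P') $$ (i, j) = 0"
    and "\<And>i j. i < m \<Longrightarrow> r \<le> j \<Longrightarrow> j < n \<Longrightarrow> (X12 * P') $$ (i, j) = 0"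
proof -
  interpret real_vec_space n .
  let ?M = "transpose_mat X2" and ?N = "transpose_mat X12"
  let ?K = "block_krylov ?M ?N n"
  have M: "?M \<in> carrier_mat n n" and N: "?N \<in> carrier_mat n m" using X2 X12 by auto
  have K: "?K \<in> carrier_mat n (m * (n + 1))" by (rule block_krylov_carrier[OF N])
  then have "rank ?K = r" using rank unfolding mat_rank_def by simp
  then obtain R R' where R: "R \<in> carrier_mat n n" and R': "R' \<in> carrier_mat n n"
    and inv: "R * R' = 1\<^sub>m n" "R' * R = 1\<^sub>m n" and "r \<le> n"
    and block_zero: "\<And>i j. r \<le> i \<Longrightarrow> i < n \<Longrightarrow> j < r \<Longrightarrow> (R' * ?M * R) $$ (i, j) = 0"
    and tail_zero: "\<And>v i. v \<in> set (cols ?K) \<Longrightarrow> r \<le> i \<Longrightarrow> i < n \<Longrightarrow> (R' *\<^sub>v v) $ i = 0"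
    using invariant_column_space_block_triangular[OF M K block_krylov_invariant[OF M N]] by metis
  show thesis
  proof (rule that)
    show "transpose_mat R \<in> carrier_mat n n" "transpose_mat R' \<in> carrier_mat n n"
      using R R' by auto
    show "transpose_mat R * transpose_mat R' = 1\<^sub>m n" "transpose_mat R' * transpose_mat R = 1\<^sub>m n"
      using inv R R' by (metis transpose_mult transpose_one)+
    show "r \<le> n" by fact
  next
    fix i j assume ij: "i < r" "r \<le> j" "j < n"
    have "transpose_mat (R' * ?M * R) = transpose_mat R * transpose_mat (R' * ?M)"
      using R R' M by (intro transpose_mult) auto
    also have "transpose_mat (R' * ?M) = X2 * transpose_mat R'"
      using transpose_mult[OF R' M] by simp
    finally have "transpose_mat R * X2 * transpose_mat R' = transpose_mat (R' * ?M * R)"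
      using R R' X2 by (simp add: assoc_mult_mat[of _ n n _ n _ n])
    then show "(transpose_mat R * X2 * transpose_mat R') $$ (i, j) = 0"
      using block_zero[of j i] ij R R' by simp
  next
    fix i j assume ij: "i < m" "r \<le> j" "j < n"
    have "col ?N i \<in> carrier_vec n" using col_dim[of ?N i] N by simp
    then have "col ?N i = (?M ^\<^sub>m 0) *\<^sub>v col ?N i" using M by simp
    also have "\<dots> \<in> set (cols ?K)" by (rule pow_mult_col_in_cols_block_krylov[OF M N le0 \<open>i < m\<close>])
    finally have "col ?N i \<in> set (cols ?K)" .
    then have "(R' *\<^sub>v col ?N i) $ j = 0" using tail_zero ij by blast
    moreover have "X12 * transpose_mat R' = transpose_mat (R' * ?N)"
      using R' X12 by (simp add: transpose_mult[of _ n n])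
    ultimately show "(X12 * transpose_mat R') $$ (i, j) = 0" using ij R' N by simp
  qed
qed

lemma similar_mat_wit_block_diag:
  fixes P P' :: "'a :: comm_ring_1 mat"
  assumes A1: "A1 \<in> carrier_mat m m" and X12: "X12 \<in> carrier_mat m n" and X2: "X2 \<in> carrier_mat n n"
    and P: "P \<in> carrier_mat n n" and P': "P' \<in> carrier_mat n n"
    and inv: "P * P' = 1\<^sub>m n" "P' * P = 1\<^sub>m n"
  shows "similar_mat_wit (four_block_mat A1 (X12 * P') (0\<^sub>m n m) (P * X2 * P'))
    (four_block_mat A1 X12 (0\<^sub>m n m) X2)
    (four_block_mat (1\<^sub>m m) (0\<^sub>m m n) (0\<^sub>m n m) P) (four_block_mat (1\<^sub>m m) (0\<^sub>m m n) (0\<^sub>m n m) P')"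
proof (rule similar_mat_witI[of _ _ "m + n"])
  show "four_block_mat (1\<^sub>m m) (0\<^sub>m m n) (0\<^sub>m n m) P * four_block_mat (1\<^sub>m m) (0\<^sub>m m n) (0\<^sub>m n m) P'
    = 1\<^sub>m (m + n)"
    using P P' inv by (subst mult_four_block_mat[of _ m m _ n _ n _ _ m _ n]) auto
  show "four_block_mat (1\<^sub>m m) (0\<^sub>m m n) (0\<^sub>m n m) P' * four_block_mat (1\<^sub>m m) (0\<^sub>m m n) (0\<^sub>m n m) P
    = 1\<^sub>m (m + n)"
    using P P' inv by (subst mult_four_block_mat[of _ m m _ n _ n _ _ m _ n]) auto
  have "four_block_mat (1\<^sub>m m) (0\<^sub>m m n) (0\<^sub>m n m) P * four_block_mat A1 X12 (0\<^sub>m n m) X2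
    = four_block_mat A1 X12 (0\<^sub>m n m) (P * X2)"
    using A1 X12 X2 P by (subst mult_four_block_mat[of _ m m _ n _ n _ _ m _ n]) auto
  then show "four_block_mat A1 (X12 * P') (0\<^sub>m n m) (P * X2 * P')
    = four_block_mat (1\<^sub>m m) (0\<^sub>m m n) (0\<^sub>m n m) P * four_block_mat A1 X12 (0\<^sub>m n m) X2
      * four_block_mat (1\<^sub>m m) (0\<^sub>m m n) (0\<^sub>m n m) P'"
    using A1 X12 X2 P P' by (simp add: mult_four_block_mat[of _ m m _ n _ n _ _ m _ n])
qed (use A1 X12 X2 P P' in auto)

lemma block_diag_mult_append_rows_zero:
  fixes P :: "'a :: semiring_1 mat"
  assumes "B1 \<in> carrier_mat m q" and "P \<in> carrier_mat n n"
  shows "four_block_mat (1\<^sub>m m) (0\<^sub>m m n) (0\<^sub>m n m) P * (B1 @\<^sub>r 0\<^sub>m n q) = B1 @\<^sub>r 0\<^sub>m n q"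
  unfolding append_rows_def using assms
  by (subst mult_four_block_mat[of _ m m _ n _ n _ _ q _ 0]) auto

lemma append_rows_zero_split:
  assumes "B1 \<in> carrier_mat m q" and "r \<le> n"
  shows "B1 @\<^sub>r 0\<^sub>m n q = B1 @\<^sub>r 0\<^sub>m r q @\<^sub>r 0\<^sub>m (n - r) q"
  unfolding append_rows_def using assms by (intro eq_matI) auto

lemma four_block_mat_as_block3_mat:
  fixes A1 H G :: "real mat"
  assumes A1: "A1 \<in> carrier_mat m m" and H: "H \<in> carrier_mat m n" and G: "G \<in> carrier_mat n n"
    and "r \<le> n"
    and G_zero: "\<And>i j. i < r \<Longrightarrow> r \<le> j \<Longrightarrow> j < n \<Longrightarrow> G $$ (i, j) = 0"
    and H_zero: "\<And>i j. i < m \<Longrightarrow> r \<le> j \<Longrightarrow> j < n \<Longrightarrow> H $$ (i, j) = 0"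
  obtains A12 A2 A32 A3 where "A12 \<in> carrier_mat m r" and "A2 \<in> carrier_mat r r"
    and "A32 \<in> carrier_mat (n - r) r" and "A3 \<in> carrier_mat (n - r) (n - r)"
    and "four_block_mat A1 H (0\<^sub>m n m) G = block3_mat
      A1 A12 (0\<^sub>m m (n - r)) (0\<^sub>m r m) A2 (0\<^sub>m r (n - r)) (0\<^sub>m (n - r) m) A32 A3"
proof (rule that)
  let ?B3 = "block3_mat A1 (mat m r (\<lambda>(i, j). H $$ (i, j))) (0\<^sub>m m (n - r))
    (0\<^sub>m r m) (mat r r (\<lambda>(i, j). G $$ (i, j))) (0\<^sub>m r (n - r))
    (0\<^sub>m (n - r) m) (mat (n - r) r (\<lambda>(i, j). G $$ (i + r, j)))
      (mat (n - r) (n - r) (\<lambda>(i, j). G $$ (i + r, j + r)))"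
  show "four_block_mat A1 H (0\<^sub>m n m) G = ?B3"
  proof (rule eq_matI)
    have dims: "dim_row ?B3 = m + n" "dim_col ?B3 = m + n"
      using A1 \<open>r \<le> n\<close> unfolding block3_mat_def Let_def by auto
    then show "dim_row (four_block_mat A1 H (0\<^sub>m n m) G) = dim_row ?B3"
      and "dim_col (four_block_mat A1 H (0\<^sub>m n m) G) = dim_col ?B3"
      using A1 G by auto
    fix i j assume "i < dim_row ?B3" and "j < dim_col ?B3"
    then have "i < m + n" and "j < m + n" using dims by auto
    then show "four_block_mat A1 H (0\<^sub>m n m) G $$ (i, j) = ?B3 $$ (i, j)"
      using A1 H G \<open>r \<le> n\<close> G_zero[of "i - m" "j - m"] H_zero[of i "j - m"]
      unfolding block3_mat_def Let_def by auto
  qed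
qed auto

theorem proposition1:
  fixes A B T Ti A1 X12 X2 B1 :: "real mat" and d du sc se :: nat
  assumes A: "A \<in> carrier_mat d d" and B: "B \<in> carrier_mat d du"
    and rank_G: "mat_rank (block_krylov A B d) = sc" and sc_lt: "sc < d"
    and T: "T \<in> carrier_mat d d" and Ti: "Ti \<in> carrier_mat d d"
    and T_inv: "T * Ti = 1\<^sub>m d" "Ti * T = 1\<^sub>m d"
    and A1: "A1 \<in> carrier_mat sc sc" and X12: "X12 \<in> carrier_mat sc (d - sc)"
    and X2: "X2 \<in> carrier_mat (d - sc) (d - sc)" and B1: "B1 \<in> carrier_mat sc du"
    and TAT: "T * A * Ti = four_block_mat A1 X12 (0\<^sub>m (d - sc) sc) X2"
    and TB: "T * B = B1 @\<^sub>r 0\<^sub>m (d - sc) du"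
    and rank_RD: "mat_rank (block_krylov (transpose_mat X2) (transpose_mat X12) (d - sc)) = se"
  shows "\<exists>S Si A12 A2 A32 A3.
     S \<in> carrier_mat d d \<and> Si \<in> carrier_mat d d \<and> S * Si = 1\<^sub>m d \<and> Si * S = 1\<^sub>m d \<and>
     A12 \<in> carrier_mat sc se \<and> A2 \<in> carrier_mat se se \<and>
     A32 \<in> carrier_mat (d - sc - se) se \<and> A3 \<in> carrier_mat (d - sc - se) (d - sc - se) \<and>
     S * A * Si = block3_mat
        A1 A12 (0\<^sub>m sc (d - sc - se))
        (0\<^sub>m se sc) A2 (0\<^sub>m se (d - sc - se))
        (0\<^sub>m (d - sc - se) sc) A32 A3 \<and>
     S * B = B1 @\<^sub>r 0\<^sub>m se du @\<^sub>r 0\<^sub>m (d - sc - se) du"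
proof -
  let ?n = "d - sc"
  obtain P P' where P: "P \<in> carrier_mat ?n ?n" and P': "P' \<in> carrier_mat ?n ?n"
    and inv: "P * P' = 1\<^sub>m ?n" "P' * P = 1\<^sub>m ?n" and "se \<le> ?n"
    and G_zero: "\<And>i j. i < se \<Longrightarrow> se \<le> j \<Longrightarrow> j < ?n \<Longrightarrow> (P * X2 * P') $$ (i, j) = 0"
    and H_zero: "\<And>i j. i < sc \<Longrightarrow> se \<le> j \<Longrightarrow> j < ?n \<Longrightarrow> (X12 * P') $$ (i, j) = 0"
    using krylov_adapted_change_of_basis[OF X2 X12 rank_RD] by metis
  let ?D = "four_block_mat (1\<^sub>m sc) (0\<^sub>m sc ?n) (0\<^sub>m ?n sc) P"
  let ?D' = "four_block_mat (1\<^sub>m sc) (0\<^sub>m sc ?n) (0\<^sub>m ?n sc) P'"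
  let ?G = "P * X2 * P'" and ?H = "X12 * P'"
  have "similar_mat_wit (T * A * Ti) A T Ti"
    using T Ti A T_inv by (intro similar_mat_witI[of _ _ d]) auto
  then have sim: "similar_mat_wit (four_block_mat A1 ?H (0\<^sub>m ?n sc) ?G) A (?D * T) (Ti * ?D')"
    using similar_mat_wit_trans[OF similar_mat_wit_block_diag[OF A1 X12 X2 P P' inv]] TAT by simp
  have G: "?G \<in> carrier_mat ?n ?n" and H: "?H \<in> carrier_mat sc ?n" using P P' X2 X12 by auto
  have "four_block_mat A1 ?H (0\<^sub>m ?n sc) ?G \<in> carrier_mat d d"
    using four_block_carrier_mat[OF A1 G] sc_lt by simp
  note S = similar_mat_witD2[OF this sim]
  have "?D \<in> carrier_mat d d" using four_block_carrier_mat[OF one_carrier_mat P, of sc] sc_lt by simp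
  then have SB: "?D * T * B = B1 @\<^sub>r 0\<^sub>m se du @\<^sub>r 0\<^sub>m (d - sc - se) du"
    using T B block_diag_mult_append_rows_zero[OF B1 P] append_rows_zero_split[OF B1 \<open>se \<le> ?n\<close>]
    by (simp add: assoc_mult_mat[of _ d d _ d _ du] TB)
  obtain A12 A2 A32 A3 where "A12 \<in> carrier_mat sc se" and "A2 \<in> carrier_mat se se"
    and "A32 \<in> carrier_mat (?n - se) se" and "A3 \<in> carrier_mat (?n - se) (?n - se)"
    and "four_block_mat A1 ?H (0\<^sub>m ?n sc) ?G = block3_mat
      A1 A12 (0\<^sub>m sc (?n - se)) (0\<^sub>m se sc) A2 (0\<^sub>m se (?n - se)) (0\<^sub>m (?n - se) sc) A32 A3"
    using four_block_mat_as_block3_mat[OF A1 H G \<open>se \<le> ?n\<close> G_zero H_zero] .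
  then show ?thesis using S(1,2,3,6,7) SB by metis
qed

end
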